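(* Let $\mathfrak F$ be a Frankenstein graph with partition $\{\mathsf G_1,\dots,\mathsf G_m\}$. Then there exists a permutation $\sigma$ of $\{1,\dots,m\}$ such that, writing $\mathfrak F_i=\mathsf G_{\sigma(1)}\cup\dots\cup\mathsf G_{\sigma(i)}$, we have $|V(\mathfrak F_i)\cap V(\mathsf G_{\sigma(i+1)})|\le 1$ for every $i\in\{1,\dots,m-1\}$.
   Context: A (colored) graph is a finite set $\mathsf G$ of pairs $(e,\alpha)$, where the $e$'s are pairwise distinct 2-element subsets of a vertex set and $\alpha$ is a color (colors may repeat). $V(\mathsf G)$ is its vertex set and $\chi(\mathsf G)$ its set of colors; $\mathsf G$ is rainbow if $|\chi(\mathsf G)|=|\mathsf G|$ and almost rainbow if $|\chi(\mathsf G)|=|\mathsf G|-1$. A subgraph is a subset. Paths, cycles, trees are colored graphs whose underlying uncolored edges form a path (two distinct terminals), cycle, or tree; lengths count edges. A long rainbow odd cycle is a rainbow cycle of odd length at least $7$. A theta graph is a union $\mathsf P_1\cup\mathsf P_2\cup\mathsf P_3$ of three paths with the same terminals $s\neq t$ such that any two share no vertex other than $s,t$ and no underlying uncolored edge. A bad piece is an almost rainbow theta graph with at least $6$ vertices that is the union of three rainbow paths as in the definition of a theta graph. A partition of a graph $\mathsf G$ is a collection $\{\mathsf G_1,\dots,\mathsf G_m\}$ of graphs with $\mathsf G=\bigcup_i\mathsf G_i$ and, for $i\ne j$, $|V(\mathsf G_i)\cap V(\mathsf G_j)|\le 1$ and $\chi(\mathsf G_i)\cap\chi(\mathsf G_j)=\emptyset$;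 its members are called parts. A Frankenstein graph is a graph $\mathfrak F$ together with a partition $\{\mathsf C_1,\dots,\mathsf C_c,\mathsf B_1,\dots,\mathsf B_b,\mathsf T_1,\dots,\mathsf T_t\}$ ($c,b,t\ge0$, $c+b+t\ge1$) in which the $\mathsf C_i$ are long rainbow odd cycles, the $\mathsf B_i$ are bad pieces and the $\mathsf T_i$ are rainbow trees, such that (F1) $V(\mathsf T_p)\cap V(\mathsf T_q)=\emptyset$ for $p\neq q$, and (F2) no subgraph of $\mathfrak F$ is a rainbow even cycle. *)

theory Defs
  imports Main
begin

type_synonym ('v, 'c) cgraph = "('v set \<times> 'c) set"

definition cgraph :: "('v, 'c) cgraph \<Rightarrow> bool" where
  "cgraph G \<longleftrightarrow> finite G \<and> (\<forall>(e, a) \<in> G. card e = 2)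
     \<and> (\<forall>e a b. (e, a) \<in> G \<longrightarrow> (e, b) \<in> G \<longrightarrow> a = b)"

definition verts :: "('v, 'c) cgraph \<Rightarrow> 'v set" where
  "verts G = \<Union> (fst ` G)"

definition colors :: "('v, 'c) cgraph \<Rightarrow> 'c set" where
  "colors G = snd ` G"

definition uedges :: "('v, 'c) cgraph \<Rightarrow> 'v set set" where
  "uedges G = fst ` G"

definition rainbow :: "('v, 'c) cgraph \<Rightarrow> bool" where
  "rainbow G \<longleftrightarrow> card (colors G) = card G"

definition almost_rainbow :: "('v, 'c) cgraph \<Rightarrow> bool" where
  "almost_rainbow G \<longleftrightarrow> card (colors G) + 1 = card G"

definition path_between :: "('v, 'c) cgraph \<Rightarrow> 'v \<Rightarrow> 'v \<Rightarrow> bool" where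
  "path_between G s t \<longleftrightarrow> cgraph G \<and> s \<noteq> t \<and>
     (\<exists>vs. distinct vs \<and> length vs \<ge> 2 \<and> hd vs = s \<and> last vs = t \<and>
        uedges G = {{vs ! i, vs ! Suc i} | i. Suc i < length vs})"

definition is_path :: "('v, 'c) cgraph \<Rightarrow> bool" where
  "is_path G \<longleftrightarrow> (\<exists>s t. path_between G s t)"

definition is_cycle :: "('v, 'c) cgraph \<Rightarrow> bool" where
  "is_cycle G \<longleftrightarrow> cgraph G \<and>
     (\<exists>vs. distinct vs \<and> length vs \<ge> 3 \<and>
        uedges G = {{vs ! i, vs ! Suc i} | i. Suc i < length vs} \<union> {{last vs, hd vs}})"

definition connected_cg :: "('v, 'c) cgraph \<Rightarrow> bool" where
  "connected_cg G \<longleftrightarrow> (\<forall>u \<in> verts G. \<forall>v \<in> verts G.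
     (u, v) \<in> {(x, y). {x, y} \<in> uedges G}\<^sup>*)"

definition is_tree :: "('v, 'c) cgraph \<Rightarrow> bool" where
  "is_tree G \<longleftrightarrow> cgraph G \<and> G \<noteq> {} \<and> connected_cg G \<and> (\<forall>H \<subseteq> G. \<not> is_cycle H)"

definition long_rainbow_odd_cycle :: "('v, 'c) cgraph \<Rightarrow> bool" where
  "long_rainbow_odd_cycle G \<longleftrightarrow> is_cycle G \<and> rainbow G \<and> odd (card G) \<and> card G \<ge> 7"

definition theta_parts :: "('v, 'c) cgraph \<Rightarrow> ('v, 'c) cgraph \<Rightarrow> ('v, 'c) cgraph \<Rightarrow> 'v \<Rightarrow> 'v \<Rightarrow> bool" where
  "theta_parts P1 P2 P3 s t \<longleftrightarrow> s \<noteq> t \<and>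
     path_between P1 s t \<and> path_between P2 s t \<and> path_between P3 s t \<and>
     verts P1 \<inter> verts P2 \<subseteq> {s, t} \<and> verts P1 \<inter> verts P3 \<subseteq> {s, t} \<and>
     verts P2 \<inter> verts P3 \<subseteq> {s, t} \<and>
     uedges P1 \<inter> uedges P2 = {} \<and> uedges P1 \<inter> uedges P3 = {} \<and> uedges P2 \<inter> uedges P3 = {}"

definition is_theta :: "('v, 'c) cgraph \<Rightarrow> bool" where
  "is_theta G \<longleftrightarrow> (\<exists>P1 P2 P3 s t. theta_parts P1 P2 P3 s t \<and> G = P1 \<union> P2 \<union> P3)"

definition bad_piece :: "('v, 'c) cgraph \<Rightarrow> bool" where
  "bad_piece G \<longleftrightarrow> cgraph G \<and> almost_rainbow G \<and> card (verts G) \<ge> 6 \<and>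
     (\<exists>P1 P2 P3 s t. theta_parts P1 P2 P3 s t \<and> G = P1 \<union> P2 \<union> P3 \<and>
        rainbow P1 \<and> rainbow P2 \<and> rainbow P3)"

definition is_partition :: "('v, 'c) cgraph \<Rightarrow> ('v, 'c) cgraph list \<Rightarrow> bool" where
  "is_partition G Gs \<longleftrightarrow> (\<forall>H \<in> set Gs. cgraph H) \<and> G = \<Union> (set Gs) \<and>
     (\<forall>i < length Gs. \<forall>j < length Gs. i \<noteq> j \<longrightarrow>
        card (verts (Gs ! i) \<inter> verts (Gs ! j)) \<le> 1 \<and> colors (Gs ! i) \<inter> colors (Gs ! j) = {})"

definition frankenstein :: "('v, 'c) cgraph \<Rightarrow> ('v, 'c) cgraph list \<Rightarrow> bool" where
  "frankenstein F Gs \<longleftrightarrow> cgraph F \<and> is_partition F Gs \<and> Gs \<noteq> [] \<and>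
     (\<forall>H \<in> set Gs. long_rainbow_odd_cycle H \<or> bad_piece H \<or> (rainbow H \<and> is_tree H)) \<and>
     (\<forall>i < length Gs. \<forall>j < length Gs. i \<noteq> j \<longrightarrow>
        rainbow (Gs ! i) \<and> is_tree (Gs ! i) \<and> rainbow (Gs ! j) \<and> is_tree (Gs ! j) \<longrightarrow>
        verts (Gs ! i) \<inter> verts (Gs ! j) = {}) \<and>
     (\<forall>H \<subseteq> F. \<not> (is_cycle H \<and> rainbow H \<and> even (card H)))"

end

theory Submission imports Defs begin

text \<open>The parts are ordered greedily, one block at a time: while some unplaced part touches the
  current block it is appended, otherwise a new block is started with any unplaced part. A block
  keeps the invariant that any two of its vertices are joined by a rainbow path inside it, and by
  rainbow paths of both parities unless the first vertex lies in a tree part. Long odd cycles and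
  bad pieces provide both parities between any two of their vertices, because their rainbow cycles
  are odd by (F2); gluing two such graphs at one vertex with disjoint colours keeps the invariant.
  If an unplaced part met the current block in two vertices, a rainbow path through the block
  between two consecutive common vertices and a path of the same parity through the part would
  form a rainbow even cycle, contradicting (F2); by (F1) one of the two sides is not a tree there
  and supplies that parity. Finished blocks are never touched again, so every newly placed part
  meets the union of its predecessors in at most one vertex.\<close>

section \<open>Walks given by vertex lists\<close>

definition walk_edges :: "'v list \<Rightarrow> 'v set set" where
  "walk_edges xs = {{xs ! i, xs ! Suc i} | i. Suc i < length xs}"

lemma walk_edges_conv_image: "walk_edges xs = (\<lambda>i. {xs ! i, xs ! Suc i}) ` {..<length xs - 1}"
  by (auto simp: walk_edges_def)

lemma finite_walk_edges [simp]: "finite (walk_edges xs)"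
  by (simp add: walk_edges_conv_image)

lemma walk_edges_Nil [simp]: "walk_edges [] = {}"
  and walk_edges_singleton [simp]: "walk_edges [x] = {}"
  by (simp_all add: walk_edges_def)

lemma walk_edges_Cons_Cons [simp]:
  "walk_edges (x # y # xs) = insert {x, y} (walk_edges (y # xs))"
  by (simp add: walk_edges_conv_image lessThan_Suc_eq_insert_0 image_image)

lemma walk_edges_Cons: "xs \<noteq> [] \<Longrightarrow> walk_edges (x # xs) = insert {x, hd xs} (walk_edges xs)"
  by (cases xs) auto

lemma walk_edges_append:
  "xs \<noteq> [] \<Longrightarrow> ys \<noteq> [] \<Longrightarrow>
    walk_edges (xs @ ys) = walk_edges xs \<union> walk_edges ys \<union> {{last xs, hd ys}}"
  by (induction xs rule: induct_list012) (auto simp: walk_edges_Cons)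

lemma walk_edges_append_tl:
  assumes "xs \<noteq> []" "ys \<noteq> []" "last xs = hd ys"
  shows "walk_edges (xs @ tl ys) = walk_edges xs \<union> walk_edges ys"
proof (cases "tl ys = []")
  case True
  then show ?thesis using assms(2) by (cases ys) auto
next
  case False
  then show ?thesis
    using assms walk_edges_Cons[OF False, of "hd ys"] by (simp add: walk_edges_append)
qed

lemma walk_edges_rev [simp]: "walk_edges (rev xs) = walk_edges xs"
proof (induction xs)
  case (Cons x xs)
  then show ?case
    by (cases "xs = []") (auto simp: walk_edges_append walk_edges_Cons last_rev insert_commute)
qed simp

lemma walk_edges_take_drop: "walk_edges (take k xs) \<union> walk_edges (drop k xs) \<subseteq> walk_edges xs"
  using walk_edges_append[of "take k xs" "drop k xs"]
  by (cases "take k xs = [] \<or> drop k xs = []") auto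

lemma walk_edges_take: "walk_edges (take k xs) \<subseteq> walk_edges xs"
  and walk_edges_drop: "walk_edges (drop k xs) \<subseteq> walk_edges xs"
  using walk_edges_take_drop by blast+

lemma walk_edges_subset_Pow: "walk_edges xs \<subseteq> Pow (set xs)"
  by (auto simp: walk_edges_def)

lemma card_walk_edge:
  assumes "distinct xs" and "e \<in> walk_edges xs"
  shows "card e = 2"
proof -
  obtain i where i: "Suc i < length xs" "e = {xs ! i, xs ! Suc i}"
    using assms(2) by (auto simp: walk_edges_def)
  then have "xs ! i \<noteq> xs ! Suc i" using assms(1) by (simp add: nth_eq_iff_index_eq)
  then show ?thesis using i(2) by simp
qed

lemma walk_edges_disjoint:
  assumes "distinct xs" and "set xs \<inter> set ys \<subseteq> {x}"
  shows "walk_edges xs \<inter> walk_edges ys = {}"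
proof (rule ccontr)
  assume "walk_edges xs \<inter> walk_edges ys \<noteq> {}"
  then obtain e where e: "e \<in> walk_edges xs" "e \<in> walk_edges ys" by blast
  then have "e \<subseteq> {x}" using walk_edges_subset_Pow assms(2) by blast
  then have "card e \<le> 1" using card_mono[of "{x}" e] by simp
  then show False using card_walk_edge[OF assms(1) e(1)] by simp
qed

lemma card_walk_edges:
  assumes "distinct xs" shows "card (walk_edges xs) = length xs - 1"
proof -
  have "inj_on (\<lambda>i. {xs ! i, xs ! Suc i}) {..<length xs - 1}"
    using assms by (auto simp: inj_on_def doubleton_eq_iff nth_eq_iff_index_eq)
  then show ?thesis by (simp add: walk_edges_conv_image card_image)
qed

lemma Union_walk_edges: "length xs \<ge> 2 \<Longrightarrow> \<Union> (walk_edges xs) = set xs"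
proof (induction xs rule: induct_list012)
  case (3 x y zs)
  then show ?case by (cases zs) auto
qed auto

lemma walk_edges_closed: "xs \<noteq> [] \<Longrightarrow> walk_edges (xs @ [hd xs]) = walk_edges xs \<union> {{last xs, hd xs}}"
  by (simp add: walk_edges_append)

lemma card_walk_edges_closed:
  assumes "distinct xs" and "length xs \<ge> 3"
  shows "card (walk_edges (xs @ [hd xs])) = length xs"
proof -
  have ne: "xs \<noteq> []" using assms(2) by auto
  have "{last xs, hd xs} \<notin> walk_edges xs"
  proof
    assume "{last xs, hd xs} \<in> walk_edges xs"
    then obtain i where i: "Suc i < length xs" "{xs ! (length xs - 1), xs ! 0} = {xs ! i, xs ! Suc i}"
      by (auto simp: walk_edges_def hd_conv_nth[OF ne] last_conv_nth[OF ne])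
    moreover have "0 < length xs" "length xs - 1 < length xs" using ne by auto
    ultimately have "length xs - 1 = Suc i \<and> 0 = i"
      using assms(1) by (auto simp: doubleton_eq_iff nth_eq_iff_index_eq)
    then show False using assms(2) by auto
  qed
  then show ?thesis
    using assms by (simp add: walk_edges_closed[OF ne] card_walk_edges)
qed

lemma length_append_tl: "ys \<noteq> [] \<Longrightarrow> length (xs @ tl ys) + 1 = length xs + length ys"
  by (cases ys) auto

lemma set_append_tl: "ys \<noteq> [] \<Longrightarrow> hd ys \<in> set xs \<Longrightarrow> set (xs @ tl ys) = set xs \<union> set ys"
  by (cases ys) auto

lemma walk_edges_append_Cons: "walk_edges (us @ x # vs) = walk_edges (us @ [x]) \<union> walk_edges (x # vs)"
  using walk_edges_append_tl[of "us @ [x]" "x # vs"] by simp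

lemma length_2_conv_hd_last: "length xs = 2 \<Longrightarrow> xs = [hd xs, last xs]"
  by (cases xs; cases "tl xs") auto

lemma rtrancl_walk_path:
  assumes "(x, y) \<in> {(a, b). {a, b} \<in> E}\<^sup>*"
  obtains P where "distinct P" "P \<noteq> []" "hd P = x" "last P = y" "walk_edges P \<subseteq> E"
proof -
  from assms have "\<exists>P. distinct P \<and> P \<noteq> [] \<and> hd P = x \<and> last P = y \<and> walk_edges P \<subseteq> E"
  proof (induction rule: rtrancl_induct)
    case base
    show ?case by (rule exI[of _ "[x]"]) simp
  next
    case (step y z)
    then obtain P where P: "distinct P" "P \<noteq> []" "hd P = x" "last P = y" "walk_edges P \<subseteq> E"
      by blast
    show ?case
    proof (cases "z \<in> set P")
      case True
      then obtain us vs where P_eq: "P = us @ z # vs" by (meson split_list)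
      have "walk_edges (us @ [z]) \<subseteq> walk_edges P" using walk_edges_append_Cons[of us z vs] P_eq by blast
      then have "walk_edges (us @ [z]) \<subseteq> E" using P(5) by blast
      then show ?thesis using P P_eq by (intro exI[of _ "us @ [z]"]) (cases us, auto)
    next
      case False
      have "walk_edges (P @ [z]) \<subseteq> E" using P step(2) by (simp add: walk_edges_append)
      then show ?thesis using P False by (intro exI[of _ "P @ [z]"]) simp
    qed
  qed
  then show thesis using that by blast
qed

lemma parallel_paths_closed_walk:
  assumes A: "distinct A" "A \<noteq> []" "hd A = x" "last A = y"
    and B: "distinct B" "B \<noteq> []" "hd B = x" "last B = y"
    and xy: "x \<noteq> y" and AB: "set A \<inter> set B \<subseteq> {x, y}"
  obtains vs where "distinct vs" "length vs + 2 = length A + length B"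
    "walk_edges (vs @ [hd vs]) = walk_edges A \<union> walk_edges B" "set vs = set A \<union> set B"
proof -
  define M where "M = butlast (tl B)"
  have B_eq: "B = x # M @ [y]"
    using B xy by (cases B) (auto simp: M_def dest: append_butlast_last_id)
  have M: "x \<notin> set M" "y \<notin> set M" "distinct M" "set A \<inter> set M = {}"
    using B(1) AB xy by (auto simp: B_eq)
  define vs where "vs = A @ rev M"
  have "walk_edges (vs @ [hd vs]) = walk_edges (A @ rev M @ [x])"
    using A by (simp add: vs_def)
  also have "\<dots> = walk_edges A \<union> walk_edges (y # rev M @ [x])"
    using A by (simp add: walk_edges_append walk_edges_Cons)
  also have "walk_edges (y # rev M @ [x]) = walk_edges B"
    using walk_edges_rev[of B] by (simp add: B_eq)
  finally have "walk_edges (vs @ [hd vs]) = walk_edges A \<union> walk_edges B" .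
  moreover have "distinct vs" "length vs + 2 = length A + length B" "set vs = set A \<union> set B"
    using A M by (auto simp: vs_def B_eq)
  ultimately show thesis using that by blast
qed

lemma closed_walk_arcs:
  assumes vs: "distinct vs" and ij: "i < j" "j < length vs"
  obtains P Q where "distinct P" "P \<noteq> []" "hd P = vs ! i" "last P = vs ! j"
    "distinct Q" "Q \<noteq> []" "hd Q = vs ! i" "last Q = vs ! j"
    "walk_edges P \<subseteq> walk_edges (vs @ [hd vs])" "walk_edges Q \<subseteq> walk_edges (vs @ [hd vs])"
    "length P + length Q = length vs + 2"
proof -
  have ne: "vs \<noteq> []" using ij by auto
  define P where "P = drop i (take (Suc j) vs)"
  define L where "L = rev (take (Suc i) vs)"
  define R where "R = rev (drop j vs)"
  have L: "L \<noteq> []" "hd L = vs ! i" "last L = hd vs"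
    using ij ne by (auto simp: L_def hd_rev last_rev take_Suc_conv_app_nth hd_conv_nth)
  have "walk_edges L \<subseteq> walk_edges vs"
    unfolding L_def walk_edges_rev by (rule walk_edges_take)
  have R: "R \<noteq> []" "hd R = last vs" "last R = vs ! j" "walk_edges R \<subseteq> walk_edges vs"
    using ij walk_edges_drop[of j vs] by (auto simp: R_def hd_rev last_rev hd_drop_conv_nth)
  have closed: "walk_edges (vs @ [hd vs]) = walk_edges vs \<union> {{last vs, hd vs}}"
    by (rule walk_edges_closed[OF ne])
  have "walk_edges P \<subseteq> walk_edges vs"
    using walk_edges_drop[of i "take (Suc j) vs"] walk_edges_take[of "Suc j" vs] by (auto simp: P_def)
  then have "walk_edges P \<subseteq> walk_edges (vs @ [hd vs])" using closed by blast
  moreover have "walk_edges (L @ R) \<subseteq> walk_edges (vs @ [hd vs])"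
    using L R \<open>walk_edges L \<subseteq> walk_edges vs\<close> closed by (auto simp: walk_edges_append)
  moreover have "distinct (L @ R)"
    using vs ij set_take_disj_set_drop_if_distinct[OF vs, of "Suc i" j] by (simp add: L_def R_def)
  moreover have "distinct P" unfolding P_def by (intro distinct_drop distinct_take vs)
  moreover have "P \<noteq> []" "hd P = vs ! i" "last P = vs ! j"
    using ij by (auto simp: P_def hd_drop_conv_nth take_Suc_conv_app_nth)
  moreover have "length P + length (L @ R) = length vs + 2"
    using ij by (simp add: P_def L_def R_def)
  ultimately show thesis using that[of P "L @ R"] L R by simp
qed

lemma odd_closed_walk_arc:
  assumes vs: "distinct vs" "odd (length vs)" and xy: "x \<in> set vs" "y \<in> set vs" "x \<noteq> y"
  obtains P where "distinct P" "P \<noteq> []" "hd P = x" "last P = y"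
    "walk_edges P \<subseteq> walk_edges (vs @ [hd vs])" "even (length P) \<longleftrightarrow> b"
proof -
  have arc: "\<exists>P. distinct P \<and> P \<noteq> [] \<and> hd P = vs ! i \<and> last P = vs ! j
      \<and> walk_edges P \<subseteq> walk_edges (vs @ [hd vs]) \<and> (even (length P) \<longleftrightarrow> c)"
    if ij: "i < j" "j < length vs" for i j c
  proof -
    obtain P Q where PQ: "distinct P" "P \<noteq> []" "hd P = vs ! i" "last P = vs ! j"
      "distinct Q" "Q \<noteq> []" "hd Q = vs ! i" "last Q = vs ! j"
      "walk_edges P \<subseteq> walk_edges (vs @ [hd vs])" "walk_edges Q \<subseteq> walk_edges (vs @ [hd vs])"
      "length P + length Q = length vs + 2"
      by (rule closed_walk_arcs[OF vs(1) ij])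
    then have "even (length P) \<longleftrightarrow> odd (length Q)" using vs(2) by presburger
    then show ?thesis using PQ by metis
  qed
  obtain i j where ij: "i < length vs" "j < length vs" "x = vs ! i" "y = vs ! j"
    using xy by (auto simp: in_set_conv_nth)
  then consider "i < j" | "j < i" using xy(3) by fastforce
  then show thesis
  proof cases
    case 1
    then show thesis using arc[OF 1 ij(2), of b] that ij by blast
  next
    case 2
    then obtain P where "distinct P" "P \<noteq> []" "hd P = y" "last P = x"
        "walk_edges P \<subseteq> walk_edges (vs @ [hd vs])" "even (length P) \<longleftrightarrow> b"
      using arc[OF 2 ij(1), of b] ij by blast
    then show thesis using that[of "rev P"] by (simp add: hd_rev last_rev)
  qed
qed

section \<open>Rainbow paths\<close>

lemma rainbow_iff_inj_on_snd: "finite G \<Longrightarrow> rainbow G \<longleftrightarrow> inj_on snd G"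
  by (simp add: rainbow_def colors_def inj_on_iff_eq_card)

lemma cgraph_subset: "cgraph G \<Longrightarrow> H \<subseteq> G \<Longrightarrow> cgraph H"
  unfolding cgraph_def by (blast intro: finite_subset)

lemma card_uedges: "cgraph G \<Longrightarrow> card (uedges G) = card G"
  unfolding cgraph_def uedges_def by (auto intro!: card_image inj_onI)

lemma finite_verts: "cgraph G \<Longrightarrow> finite (verts G)"
  unfolding cgraph_def verts_def by (fastforce intro: card_ge_0_finite)

lemma verts_conv_uedges: "verts G = \<Union> (uedges G)"
  by (simp add: verts_def uedges_def)

lemma uedges_Un: "uedges (A \<union> B) = uedges A \<union> uedges B"
  and verts_Un: "verts (A \<union> B) = verts A \<union> verts B"
  by (auto simp: uedges_def verts_def)

lemma uedges_mono: "A \<subseteq> B \<Longrightarrow> uedges A \<subseteq> uedges B"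
  by (auto simp: uedges_def)

text \<open>Parities below are those of the number of vertices, \<open>length P\<close>, not of
  the number of edges.\<close>

definition edges_along :: "('v, 'c) cgraph \<Rightarrow> 'v list \<Rightarrow> ('v, 'c) cgraph" where
  "edges_along F P = {p \<in> F. fst p \<in> walk_edges P}"

definition colors_along :: "('v, 'c) cgraph \<Rightarrow> 'v list \<Rightarrow> 'c set" where
  "colors_along F P = snd ` edges_along F P"

definition rainbow_path :: "('v, 'c) cgraph \<Rightarrow> ('v, 'c) cgraph \<Rightarrow> 'v list \<Rightarrow> 'v \<Rightarrow> 'v \<Rightarrow> bool" where
  "rainbow_path F W P x y \<longleftrightarrow> distinct P \<and> P \<noteq> [] \<and> hd P = x \<and> last P = y
     \<and> walk_edges P \<subseteq> uedges W \<and> inj_on snd (edges_along F P)"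

lemma edges_along_mono: "walk_edges P \<subseteq> walk_edges Q \<Longrightarrow> edges_along F P \<subseteq> edges_along F Q"
  and colors_along_mono: "walk_edges P \<subseteq> walk_edges Q \<Longrightarrow> colors_along F P \<subseteq> colors_along F Q"
  by (auto simp: edges_along_def colors_along_def)

lemma edges_along_subset:
  assumes "cgraph F" and "W \<subseteq> F" and "walk_edges P \<subseteq> uedges W"
  shows "edges_along F P \<subseteq> W"
proof
  fix p assume p: "p \<in> edges_along F P"
  then obtain c where "(fst p, c) \<in> W" using assms(3) by (force simp: edges_along_def uedges_def)
  moreover have "p \<in> F" using p by (simp add: edges_along_def)
  ultimately show "p \<in> W" using assms(1,2) unfolding cgraph_def by (metis prod.collapse subsetD)
qed

lemma uedges_edges_along: "walk_edges P \<subseteq> uedges F \<Longrightarrow> uedges (edges_along F P) = walk_edges P"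
  by (force simp: uedges_def edges_along_def)

lemma colors_along_rev [simp]: "colors_along F (rev P) = colors_along F P"
  by (simp add: colors_along_def edges_along_def)

lemma finite_colors_along: "cgraph F \<Longrightarrow> finite (colors_along F P)"
  by (simp add: colors_along_def edges_along_def cgraph_def)

lemma colors_along_append_tl:
  "xs \<noteq> [] \<Longrightarrow> ys \<noteq> [] \<Longrightarrow> last xs = hd ys \<Longrightarrow>
    colors_along F (xs @ tl ys) = colors_along F xs \<union> colors_along F ys"
  by (auto simp: colors_along_def edges_along_def walk_edges_append_tl)

lemma rainbow_pathD:
  assumes "rainbow_path F W P x y"
  shows "distinct P" "P \<noteq> []" "hd P = x" "last P = y" "walk_edges P \<subseteq> uedges W"
    "inj_on snd (edges_along F P)"
  using assms by (simp_all add: rainbow_path_def)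

lemma rainbow_path_rev: "rainbow_path F W P x y \<Longrightarrow> rainbow_path F W (rev P) y x"
  by (simp add: rainbow_path_def edges_along_def hd_rev last_rev)

lemma rainbow_path_mono: "rainbow_path F W P x y \<Longrightarrow> uedges W \<subseteq> uedges W' \<Longrightarrow> rainbow_path F W' P x y"
  by (auto simp: rainbow_path_def)

lemma rainbow_path_sublist:
  assumes "rainbow_path F W P x y" and "distinct Q" "Q \<noteq> []" "walk_edges Q \<subseteq> walk_edges P"
  shows "rainbow_path F W Q (hd Q) (last Q)"
  using assms edges_along_mono[OF assms(4)] by (auto simp: rainbow_path_def intro: inj_on_subset)

lemma rainbow_path_ends: "rainbow_path F W P x y \<Longrightarrow> x \<in> set P \<and> y \<in> set P"
  by (auto simp: rainbow_path_def)

lemma rainbow_path_length: "rainbow_path F W P x y \<Longrightarrow> x \<noteq> y \<Longrightarrow> length P \<ge> 2"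
  by (cases P; cases "tl P") (auto simp: rainbow_path_def)

lemma rainbow_path_verts: "rainbow_path F W P x y \<Longrightarrow> x \<noteq> y \<Longrightarrow> set P \<subseteq> verts W"
  using Union_walk_edges[of P] rainbow_path_length[of F W P x y]
  by (auto simp: rainbow_path_def verts_conv_uedges)

lemma colors_along_subset:
  assumes "cgraph F" "W \<subseteq> F" "rainbow_path F W P x y"
  shows "colors_along F P \<subseteq> colors W"
proof -
  have "edges_along F P \<subseteq> W" using edges_along_subset[OF assms(1,2) rainbow_pathD(5)[OF assms(3)]] .
  then show ?thesis by (auto simp: colors_along_def colors_def)
qed

lemma colors_along_nonempty:
  assumes P: "rainbow_path F W P x y" and xy: "x \<noteq> y" and W: "W \<subseteq> F"
  shows "colors_along F P \<noteq> {}"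
proof -
  let ?e = "{P ! 0, P ! Suc 0}"
  have "?e \<in> walk_edges P"
    using rainbow_path_length[OF P xy] unfolding walk_edges_def by force
  then have "?e \<in> uedges F" "?e \<in> walk_edges P"
    using rainbow_pathD(5)[OF P] uedges_mono[OF W] by blast+
  then show ?thesis by (force simp: colors_along_def edges_along_def uedges_def)
qed

lemma colors_along_disjoint:
  assumes "rainbow_path F W P x y" "walk_edges Q \<subseteq> walk_edges P" "walk_edges R \<subseteq> walk_edges P"
    and "walk_edges Q \<inter> walk_edges R = {}"
  shows "colors_along F Q \<inter> colors_along F R = {}"
proof -
  have "edges_along F Q \<inter> edges_along F R = {}" using assms(4) by (auto simp: edges_along_def)
  moreover have "edges_along F Q \<union> edges_along F R \<subseteq> edges_along F P"
    using edges_along_mono assms(2,3) by blast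
  ultimately show ?thesis
    using rainbow_pathD(6)[OF assms(1)] unfolding colors_along_def inj_on_def by blast
qed

lemma inj_on_snd_edges_along_Un:
  assumes "rainbow_path F W A x y" "rainbow_path F W' B x' y'"
    and "colors_along F A \<inter> colors_along F B = {}"
  shows "inj_on snd (edges_along F A \<union> edges_along F B)"
  using rainbow_pathD(6)[OF assms(1)] rainbow_pathD(6)[OF assms(2)] assms(3)
  by (simp add: inj_on_Un colors_along_def) blast

lemma rainbow_subgraph_path:
  assumes F: "cgraph F" and H: "H \<subseteq> F" "rainbow H"
    and P: "distinct P" "P \<noteq> []" "walk_edges P \<subseteq> uedges H"
  shows "rainbow_path F H P (hd P) (last P)"
proof -
  have "inj_on snd H" using H F cgraph_subset rainbow_iff_inj_on_snd by (metis cgraph_def)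
  then have "inj_on snd (edges_along F P)" using edges_along_subset[OF F H(1) P(3)] inj_on_subset by blast
  then show ?thesis using P by (simp add: rainbow_path_def)
qed

lemma rainbow_path_append:
  assumes A: "rainbow_path F W A x a" and B: "rainbow_path F W B a y"
    and vs: "set A \<inter> set B \<subseteq> {a}" and cs: "colors_along F A \<inter> colors_along F B = {}"
  shows "rainbow_path F W (A @ tl B) x y"
proof -
  note A' = rainbow_pathD[OF A] and B' = rainbow_pathD[OF B]
  obtain B0 where B0: "B = a # B0" using B'(2,3) by (cases B) auto
  have we: "walk_edges (A @ tl B) = walk_edges A \<union> walk_edges B"
    using A'(2,4) B'(2,3) by (intro walk_edges_append_tl) auto
  have "distinct (A @ tl B)" using A'(1) B'(1) vs B0 by auto
  moreover have "last (A @ tl B) = y" using A'(4) B'(4) B0 by (cases B0) auto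
  moreover have "edges_along F (A @ tl B) = edges_along F A \<union> edges_along F B"
    using we by (auto simp: edges_along_def)
  then have "inj_on snd (edges_along F (A @ tl B))" using inj_on_snd_edges_along_Un[OF A B cs] by simp
  ultimately show ?thesis using A' B' we by (simp add: rainbow_path_def)
qed

lemma rainbow_path_split:
  assumes P: "rainbow_path F W P s t" and x: "x \<in> set P"
  obtains A B where "rainbow_path F W A x s" "rainbow_path F W B x t"
    "set A \<subseteq> set P" "set B \<subseteq> set P" "set A \<inter> set B = {x}"
    "walk_edges A \<subseteq> walk_edges P" "walk_edges B \<subseteq> walk_edges P"
    "colors_along F A \<inter> colors_along F B = {}" "length A + length B = length P + 1"
proof -
  obtain us vs where P_eq: "P = us @ x # vs" using split_list[OF x] by blast
  define A where "A = rev (us @ [x])"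
  define B where "B = x # vs"
  have eA: "walk_edges A \<subseteq> walk_edges P" and eB: "walk_edges B \<subseteq> walk_edges P"
    using walk_edges_append_Cons[of us x vs] P_eq unfolding A_def B_def walk_edges_rev by blast+
  have d: "distinct P" and hP: "hd P = s" and lP: "last P = t" using rainbow_pathD[OF P] by auto
  have AB: "set A \<inter> set B = {x}" using d P_eq by (auto simp: A_def B_def)
  have "rainbow_path F W A x s"
    using rainbow_path_sublist[OF P _ _ eA] d hP P_eq by (cases us) (auto simp: A_def last_rev)
  moreover have "rainbow_path F W B x t"
    using rainbow_path_sublist[OF P _ _ eB] d lP P_eq by (auto simp: B_def)
  moreover have "colors_along F A \<inter> colors_along F B = {}"
    using colors_along_disjoint[OF P eA eB] walk_edges_disjoint[of A B x] AB d P_eq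
    by (simp add: A_def)
  moreover have "set A \<subseteq> set P" "set B \<subseteq> set P" using P_eq by (auto simp: A_def B_def)
  moreover have "length A + length B = length P + 1" using P_eq by (simp add: A_def B_def)
  ultimately show thesis using that AB eA eB by blast
qed

lemma rainbow_path_shortcut:
  assumes "x \<in> X" "y \<in> X" "x \<noteq> y" "rainbow_path F W P x y"
  shows "\<exists>x' y' P'. x' \<in> X \<and> y' \<in> X \<and> x' \<noteq> y' \<and> rainbow_path F W P' x' y'
    \<and> set P' \<inter> X \<subseteq> {x', y'}"
  using assms
proof (induction "length P" arbitrary: x y P rule: less_induct)
  case less
  show ?case
  proof (cases "set P \<inter> X \<subseteq> {x, y}")
    case True
    then show ?thesis using less.prems by blast
  next
    case False
    then obtain z where z: "z \<in> set P" "z \<in> X" "z \<noteq> x" "z \<noteq> y" by blast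
    then obtain us vs where P_eq: "P = us @ z # vs" by (meson split_list)
    have "vs \<noteq> []" using rainbow_pathD(4)[OF less.prems(4)] z(4) P_eq by auto
    then have shorter: "length (us @ [z]) < length P" using P_eq by simp
    have e: "walk_edges (us @ [z]) \<subseteq> walk_edges P" using walk_edges_append_Cons[of us z vs] P_eq by blast
    have d: "distinct (us @ [z])" using rainbow_pathD(1)[OF less.prems(4)] P_eq by simp
    have "hd (us @ [z]) = x" using rainbow_pathD(3)[OF less.prems(4)] P_eq z(3) by (cases us) auto
    moreover have "last (us @ [z]) = z" by simp
    ultimately have "rainbow_path F W (us @ [z]) x z"
      using rainbow_path_sublist[OF less.prems(4) d _ e] by simp
    then show ?thesis using less.hyps[OF shorter less.prems(1) z(2) z(3)[symmetric]] by blast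
  qed
qed

section \<open>Rainbow cycles are odd\<close>

definition no_rainbow_even_cycle :: "('v, 'c) cgraph \<Rightarrow> bool" where
  "no_rainbow_even_cycle F \<longleftrightarrow> (\<forall>H \<subseteq> F. \<not> (is_cycle H \<and> rainbow H \<and> even (card H)))"

lemma rainbow_closed_walk_odd:
  assumes nre: "no_rainbow_even_cycle F" and F: "cgraph F"
    and vs: "distinct vs" "length vs \<ge> 3"
    and E: "walk_edges (vs @ [hd vs]) \<subseteq> uedges F" and inj: "inj_on snd (edges_along F (vs @ [hd vs]))"
  shows "odd (length vs)"
proof
  assume ev: "even (length vs)"
  let ?H = "edges_along F (vs @ [hd vs])"
  have ne: "vs \<noteq> []" using vs(2) by auto
  have H: "cgraph ?H" using cgraph_subset[OF F] by (simp add: edges_along_def)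
  have uH: "uedges ?H = walk_edges vs \<union> {{last vs, hd vs}}"
    using uedges_edges_along[OF E] walk_edges_closed[OF ne] by simp
  have "is_cycle ?H" using H vs uH unfolding is_cycle_def walk_edges_def by blast
  moreover have "rainbow ?H" using inj H by (simp add: rainbow_iff_inj_on_snd cgraph_def)
  moreover have "card ?H = length vs"
    using card_uedges[OF H] uedges_edges_along[OF E] card_walk_edges_closed[OF vs] by simp
  moreover have "?H \<subseteq> F" by (auto simp: edges_along_def)
  ultimately show False using nre ev unfolding no_rainbow_even_cycle_def by metis
qed

lemma parallel_rainbow_paths_odd:
  assumes nre: "no_rainbow_even_cycle F" and F: "cgraph F" and W: "W \<subseteq> F"
    and A: "rainbow_path F W A x y" and B: "rainbow_path F W B x y" and xy: "x \<noteq> y"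
    and AB: "set A \<inter> set B \<subseteq> {x, y}" and cAB: "colors_along F A \<inter> colors_along F B = {}"
  shows "odd (length A + length B)"
proof -
  note A' = rainbow_pathD[OF A] and B' = rainbow_pathD[OF B]
  obtain vs where vs: "distinct vs" "length vs + 2 = length A + length B"
      "walk_edges (vs @ [hd vs]) = walk_edges A \<union> walk_edges B" "set vs = set A \<union> set B"
    by (rule parallel_paths_closed_walk[OF A'(1-4) B'(1-4) xy AB])
  have "length vs \<ge> 3"
  proof (rule ccontr)
    assume "\<not> ?thesis"
    then have "length A = 2" "length B = 2"
      using vs(2) rainbow_path_length[OF A xy] rainbow_path_length[OF B xy] by linarith+
    then have "A = [x, y]" "B = [x, y]"
      using length_2_conv_hd_last[of A] length_2_conv_hd_last[of B] A'(3,4) B'(3,4) by simp_all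
    then show False using cAB colors_along_nonempty[OF A xy W] by simp
  qed
  moreover have "walk_edges (vs @ [hd vs]) \<subseteq> uedges F"
    using vs(3) A'(5) B'(5) uedges_mono[OF W] by blast
  moreover have "edges_along F (vs @ [hd vs]) = edges_along F A \<union> edges_along F B"
    using vs(3) by (auto simp: edges_along_def)
  then have "inj_on snd (edges_along F (vs @ [hd vs]))" using inj_on_snd_edges_along_Un[OF A B cAB] by simp
  ultimately have "odd (length vs)" by (rule rainbow_closed_walk_odd[OF nre F vs(1)])
  then show ?thesis using vs(2) by presburger
qed

lemma parallel_rainbow_paths_parity:
  assumes nre: "no_rainbow_even_cycle F" and F: "cgraph F" and W: "W \<subseteq> F"
    and A: "rainbow_path F W A s t" and B: "rainbow_path F W B s t" and st: "s \<noteq> t"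
    and AB: "set A \<inter> set B \<subseteq> {s, t}" and cAB: "colors_along F A \<inter> colors_along F B = {}"
    and xy: "x \<in> set A \<union> set B" "y \<in> set A \<union> set B" "x \<noteq> y"
  shows "\<exists>P. rainbow_path F W P x y \<and> (even (length P) \<longleftrightarrow> b)"
proof -
  note A' = rainbow_pathD[OF A] and B' = rainbow_pathD[OF B]
  obtain vs where vs: "distinct vs" "length vs + 2 = length A + length B"
      "walk_edges (vs @ [hd vs]) = walk_edges A \<union> walk_edges B" "set vs = set A \<union> set B"
    by (rule parallel_paths_closed_walk[OF A'(1-4) B'(1-4) st AB])
  have "odd (length vs)"
    using parallel_rainbow_paths_odd[OF nre F W A B st AB cAB] vs(2) by presburger
  moreover have "x \<in> set vs" "y \<in> set vs" using xy vs(4) by auto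
  ultimately obtain P where P: "distinct P" "P \<noteq> []" "hd P = x" "last P = y"
      "walk_edges P \<subseteq> walk_edges (vs @ [hd vs])" "even (length P) \<longleftrightarrow> b"
    by (rule odd_closed_walk_arc[OF vs(1) _ _ _ xy(3)])
  have "edges_along F P \<subseteq> edges_along F A \<union> edges_along F B"
    using P(5) vs(3) by (auto simp: edges_along_def)
  moreover have "inj_on snd (edges_along F A \<union> edges_along F B)"
    by (rule inj_on_snd_edges_along_Un[OF A B cAB])
  ultimately have "inj_on snd (edges_along F P)" by (rule inj_on_subset[rotated])
  then have "rainbow_path F W P x y" using P vs(3) A'(5) B'(5) by (auto simp: rainbow_path_def)
  then show ?thesis using P(6) by blast
qed

section \<open>Paths of both parities inside a part\<close>

lemma tree_rainbow_path:
  assumes F: "cgraph F" and H: "H \<subseteq> F" "rainbow H" "is_tree H" and xy: "x \<in> verts H" "y \<in> verts H"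
  shows "\<exists>P. rainbow_path F H P x y"
proof -
  have "(x, y) \<in> {(a, b). {a, b} \<in> uedges H}\<^sup>*"
    using H(3) xy by (simp add: is_tree_def connected_cg_def)
  then obtain P where "distinct P" "P \<noteq> []" "hd P = x" "last P = y" "walk_edges P \<subseteq> uedges H"
    by (rule rtrancl_walk_path)
  then show ?thesis using rainbow_subgraph_path[OF F H(1,2)] by metis
qed

lemma is_cycle_closed_walk:
  assumes "is_cycle H"
  obtains vs where "distinct vs" "length vs \<ge> 3" "uedges H = walk_edges (vs @ [hd vs])"
    "verts H = set vs"
proof -
  obtain vs where vs: "distinct vs" "length vs \<ge> 3"
    "uedges H = walk_edges vs \<union> {{last vs, hd vs}}"
    using assms by (auto simp: is_cycle_def walk_edges_def)
  then have ne: "vs \<noteq> []" by auto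
  have "uedges H = walk_edges (vs @ [hd vs])" using vs(3) walk_edges_closed[OF ne] by simp
  moreover have "verts H = set vs"
    using Union_walk_edges[of "vs @ [hd vs]"] vs(2) ne calculation by (simp add: verts_conv_uedges insert_absorb)
  ultimately show thesis using that vs(1,2) by blast
qed

lemma long_rainbow_odd_cycle_parity:
  assumes F: "cgraph F" and H: "H \<subseteq> F" "long_rainbow_odd_cycle H"
    and xy: "x \<in> verts H" "y \<in> verts H" "x \<noteq> y"
  shows "\<exists>P. rainbow_path F H P x y \<and> (even (length P) \<longleftrightarrow> b)"
proof -
  have cyc: "is_cycle H" and rb: "rainbow H" and odd: "odd (card H)"
    using H(2) by (auto simp: long_rainbow_odd_cycle_def)
  obtain vs where vs: "distinct vs" "length vs \<ge> 3" "uedges H = walk_edges (vs @ [hd vs])"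
      "verts H = set vs"
    by (rule is_cycle_closed_walk[OF cyc])
  have "card H = length vs"
    using card_uedges[of H] cyc vs card_walk_edges_closed[OF vs(1,2)] by (simp add: is_cycle_def)
  then obtain P where "distinct P" "P \<noteq> []" "hd P = x" "last P = y"
      "walk_edges P \<subseteq> walk_edges (vs @ [hd vs])" "even (length P) \<longleftrightarrow> b"
    using odd_closed_walk_arc[OF vs(1) _ _ _ xy(3)] odd xy vs(4) by auto
  then show ?thesis using rainbow_subgraph_path[OF F H(1) rb] vs(3) by metis
qed

lemma disjoint_one_common:
  assumes "finite (C \<inter> D)" "card (C \<inter> D) \<le> 1" "X \<subseteq> C" "Y \<subseteq> C" "X \<inter> Y = {}"
  shows "X \<inter> D = {} \<or> Y \<inter> D = {}"
proof (rule ccontr)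
  assume "\<not> ?thesis"
  then obtain a b where ab: "a \<in> X" "a \<in> D" "b \<in> Y" "b \<in> D" by blast
  then have "a \<in> C \<inter> D" "b \<in> C \<inter> D" using assms(3,4) by auto
  then have "a = b" using assms(2) card_le_Suc0_iff_eq[OF assms(1)] by auto
  then show False using ab assms(5) by blast
qed

text \<open>From \<open>s\<close>, the vertex \<open>y\<close> of \<open>ws2\<close> is reached either directly along \<open>ws2\<close> or around
  through \<open>ws3\<close> and \<open>t\<close>; the two routes differ in parity by \<open>length ws2 + length ws3\<close>.\<close>

lemma theta_cross_parity_from_side:
  assumes ws2: "rainbow_path F W ws2 s t" and ws3: "rainbow_path F W ws3 s t"
    and i23: "set ws2 \<inter> set ws3 \<subseteq> {s, t}" and c23: "colors_along F ws2 \<inter> colors_along F ws3 = {}"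
    and odd: "odd (length ws2 + length ws3)"
    and A: "rainbow_path F W A x s" and iA: "set A \<inter> (set ws2 \<union> set ws3) \<subseteq> {s}"
    and cA: "colors_along F A \<inter> (colors_along F ws2 \<union> colors_along F ws3) = {}"
    and y: "y \<in> set ws2" "y \<noteq> s"
  shows "\<exists>P. rainbow_path F W P x y \<and> (even (length P) \<longleftrightarrow> b)"
proof -
  obtain G D where G: "rainbow_path F W G y s" and D: "rainbow_path F W D y t"
    and GD: "set G \<subseteq> set ws2" "set D \<subseteq> set ws2" "set G \<inter> set D = {y}"
      "walk_edges G \<subseteq> walk_edges ws2" "walk_edges D \<subseteq> walk_edges ws2"
      "length G + length D = length ws2 + 1"
    using rainbow_path_split[OF ws2 y(1)] by metis
  have cG: "colors_along F G \<subseteq> colors_along F ws2" and cD: "colors_along F D \<subseteq> colors_along F ws2"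
    using GD(4,5) by (simp_all add: colors_along_mono)
  have s_D: "s \<notin> set D" using GD(3) rainbow_path_ends[OF G] y(2) by auto
  note A' = rainbow_pathD[OF A] and ws3' = rainbow_pathD[OF ws3]
  note G' = rainbow_pathD[OF rainbow_path_rev[OF G]] and D' = rainbow_pathD[OF rainbow_path_rev[OF D]]
  define P1 where "P1 = A @ tl (rev G)"
  define A3 where "A3 = A @ tl ws3"
  define P2 where "P2 = A3 @ tl (rev D)"
  have P1: "rainbow_path F W P1 x y"
    unfolding P1_def using GD(1) iA cG cA
    by (intro rainbow_path_append[OF A rainbow_path_rev[OF G]]) auto
  have A3: "rainbow_path F W A3 x t"
    unfolding A3_def using iA cA by (intro rainbow_path_append[OF A ws3]) auto
  have "set A3 = set A \<union> set ws3"
    unfolding A3_def using A'(2,4) ws3'(2,3) last_in_set[OF A'(2)] by (intro set_append_tl) auto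
  moreover have "colors_along F A3 = colors_along F A \<union> colors_along F ws3"
    unfolding A3_def using A'(2,4) ws3'(2,3) by (intro colors_along_append_tl) auto
  ultimately have P2: "rainbow_path F W P2 x y"
    unfolding P2_def using GD(2) iA i23 s_D cD cA c23
    by (intro rainbow_path_append[OF A3 rainbow_path_rev[OF D]]) auto
  have "length P1 + 1 = length A + length G" "length A3 + 1 = length A + length ws3"
    "length P2 + 1 = length A3 + length D"
    using G' D' ws3' by (simp_all add: P1_def A3_def P2_def length_append_tl)
  then have "even (length P1) \<longleftrightarrow> odd (length P2)" using GD(6) odd by presburger
  then show ?thesis using P1 P2 by metis
qed

text \<open>The at most one colour shared by \<open>ws1\<close> and \<open>ws2\<close> lies on only one of the two halves
  of \<open>ws1\<close> at \<open>x\<close>, so \<open>x\<close> can leave \<open>ws1\<close> through the other half.\<close>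

lemma theta_cross_parity:
  assumes F: "cgraph F" and ws: "rainbow_path F W ws1 s t" "rainbow_path F W ws2 s t"
      "rainbow_path F W ws3 s t"
    and i: "set ws1 \<inter> set ws2 \<subseteq> {s, t}" "set ws1 \<inter> set ws3 \<subseteq> {s, t}" "set ws2 \<inter> set ws3 \<subseteq> {s, t}"
    and c: "colors_along F ws1 \<inter> colors_along F ws3 = {}" "colors_along F ws2 \<inter> colors_along F ws3 = {}"
      "card (colors_along F ws1 \<inter> colors_along F ws2) \<le> 1"
    and odd: "odd (length ws2 + length ws3)"
    and x: "x \<in> set ws1" "x \<notin> {s, t}" and y: "y \<in> set ws2" "y \<notin> {s, t}"
  shows "\<exists>P. rainbow_path F W P x y \<and> (even (length P) \<longleftrightarrow> b)"
proof -
  obtain A B where A: "rainbow_path F W A x s" and B: "rainbow_path F W B x t"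
    and AB: "set A \<subseteq> set ws1" "set B \<subseteq> set ws1" "set A \<inter> set B = {x}"
      "walk_edges A \<subseteq> walk_edges ws1" "walk_edges B \<subseteq> walk_edges ws1"
      "colors_along F A \<inter> colors_along F B = {}"
    using rainbow_path_split[OF ws(1) x(1)] by metis
  have "colors_along F A \<inter> colors_along F ws2 = {} \<or> colors_along F B \<inter> colors_along F ws2 = {}"
    using finite_colors_along[OF F]
    by (intro disjoint_one_common[OF _ c(3) colors_along_mono[OF AB(4)] colors_along_mono[OF AB(5)] AB(6)])
      simp
  then show ?thesis
  proof
    assume cA2: "colors_along F A \<inter> colors_along F ws2 = {}"
    have "t \<notin> set A" using AB(3) rainbow_path_ends[OF B] x(2) by auto
    then have iA: "set A \<inter> (set ws2 \<union> set ws3) \<subseteq> {s}" using AB(1) i(1,2) by blast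
    have cA: "colors_along F A \<inter> (colors_along F ws2 \<union> colors_along F ws3) = {}"
      using cA2 c(1) colors_along_mono[OF AB(4), of F] by blast
    show ?thesis
      using theta_cross_parity_from_side[OF ws(2,3) i(3) c(2) odd A iA cA y(1)] y(2) by blast
  next
    assume cB2: "colors_along F B \<inter> colors_along F ws2 = {}"
    have "s \<notin> set B" using AB(3) rainbow_path_ends[OF A] x(2) by auto
    then have iB: "set B \<inter> (set (rev ws2) \<union> set (rev ws3)) \<subseteq> {t}" using AB(2) i(1,2) by auto
    have cB: "colors_along F B \<inter> (colors_along F (rev ws2) \<union> colors_along F (rev ws3)) = {}"
      using cB2 c(1) colors_along_mono[OF AB(5), of F] by auto
    have i23: "set (rev ws2) \<inter> set (rev ws3) \<subseteq> {t, s}" using i(3) by auto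
    have c23: "colors_along F (rev ws2) \<inter> colors_along F (rev ws3) = {}" using c(2) by simp
    have odd': "odd (length (rev ws2) + length (rev ws3))" using odd by simp
    have y': "y \<in> set (rev ws2)" "y \<noteq> t" using y by auto
    show ?thesis
      using theta_cross_parity_from_side[OF rainbow_path_rev[OF ws(2)] rainbow_path_rev[OF ws(3)]
          i23 c23 odd' B iB cB y'] .
  qed
qed

lemma theta_parity:
  assumes nre: "no_rainbow_even_cycle F" and F: "cgraph F" and W: "W \<subseteq> F"
    and ws: "rainbow_path F W ws1 s t" "rainbow_path F W ws2 s t" "rainbow_path F W ws3 s t"
    and st: "s \<noteq> t"
    and i: "set ws1 \<inter> set ws2 \<subseteq> {s, t}" "set ws1 \<inter> set ws3 \<subseteq> {s, t}" "set ws2 \<inter> set ws3 \<subseteq> {s, t}"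
    and c: "colors_along F ws1 \<inter> colors_along F ws3 = {}" "colors_along F ws2 \<inter> colors_along F ws3 = {}"
      "card (colors_along F ws1 \<inter> colors_along F ws2) \<le> 1"
    and xy: "x \<in> set ws1 \<union> set ws2 \<union> set ws3" "y \<in> set ws1 \<union> set ws2 \<union> set ws3" "x \<noteq> y"
  shows "\<exists>P. rainbow_path F W P x y \<and> (even (length P) \<longleftrightarrow> b)"
proof -
  have st3: "s \<in> set ws3" "t \<in> set ws3" using rainbow_path_ends[OF ws(3)] by auto
  have odd: "odd (length ws2 + length ws3)"
    by (rule parallel_rainbow_paths_odd[OF nre F W ws(2,3) st i(3) c(2)])
  consider "x \<in> set ws1 \<union> set ws3" "y \<in> set ws1 \<union> set ws3"
    | "x \<in> set ws2 \<union> set ws3" "y \<in> set ws2 \<union> set ws3"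
    | "x \<in> set ws1 - set ws3" "y \<in> set ws2 - set ws3"
    | "y \<in> set ws1 - set ws3" "x \<in> set ws2 - set ws3"
    using xy(1,2) by blast
  then show ?thesis
  proof cases
    case 1
    then show ?thesis
      using parallel_rainbow_paths_parity[OF nre F W ws(1,3) st i(2) c(1) _ _ xy(3)] by blast
  next
    case 2
    then show ?thesis
      using parallel_rainbow_paths_parity[OF nre F W ws(2,3) st i(3) c(2) _ _ xy(3)] by blast
  next
    case 3
    then show ?thesis
      using theta_cross_parity[OF F ws i c odd, of x y] st3 by blast
  next
    case 4
    then obtain P where "rainbow_path F W P y x" "even (length P) \<longleftrightarrow> b"
      using theta_cross_parity[OF F ws i c odd, of y x] st3 by blast
    then show ?thesis using rainbow_path_rev by fastforce
  qed
qed

lemma card_Un3_one_overlap: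
  assumes fin: "finite A" "finite B" "finite C"
    and card: "card (A \<union> B \<union> C) + 1 = card A + card B + card C"
  obtains "A \<inter> C = {}" "B \<inter> C = {}" "card (A \<inter> B) \<le> 1"
    | "A \<inter> B = {}" "C \<inter> B = {}" "card (A \<inter> C) \<le> 1"
    | "B \<inter> A = {}" "C \<inter> A = {}" "card (B \<inter> C) \<le> 1"
proof -
  have "card (A \<inter> B) + card ((A \<union> B) \<inter> C) = 1"
    using card card_Un_Int[OF fin(1,2)] card_Un_Int[of "A \<union> B" C] fin by simp
  then consider "card (A \<inter> B) = 1" "card ((A \<union> B) \<inter> C) = 0"
    | "card (A \<inter> B) = 0" "card ((A \<union> B) \<inter> C) = 1"
    by linarith
  then show thesis
  proof cases
    case 1
    then have "(A \<union> B) \<inter> C = {}" using fin by simp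
    then show thesis using that(1) 1(1) by auto
  next
    case 2
    then have AB: "A \<inter> B = {}" using fin by simp
    obtain z where z: "(A \<union> B) \<inter> C = {z}" using 2(2) card_1_singletonE by blast
    show thesis
    proof (cases "z \<in> A")
      case True
      then have "A \<inter> C = {z}" "C \<inter> B = {}" using z AB by auto
      then show thesis using that(2) AB by simp
    next
      case False
      then have "B \<inter> C = {z}" "C \<inter> A = {}" using z by auto
      then show thesis using that(3) AB by (simp add: Int_commute)
    qed
  qed
qed

lemma path_between_rainbow_path:
  assumes F: "cgraph F" and P: "P \<subseteq> F" "rainbow P" "path_between P s t"
  obtains ws where "rainbow_path F P ws s t" "edges_along F ws = P" "set ws = verts P"
proof -
  obtain ws where ws: "distinct ws" "length ws \<ge> 2" "hd ws = s" "last ws = t"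
      "uedges P = walk_edges ws"
    using P(3) unfolding path_between_def walk_edges_def by blast
  have ne: "ws \<noteq> []" using ws(2) by auto
  have "rainbow_path F P ws s t"
    using rainbow_subgraph_path[OF F P(1,2) ws(1) ne] ws by simp
  moreover have "edges_along F ws = P"
    using edges_along_subset[OF F P(1)] P(1) ws(5) by (force simp: edges_along_def uedges_def)
  moreover have "set ws = verts P" using Union_walk_edges[OF ws(2)] ws(5) by (simp add: verts_conv_uedges)
  ultimately show thesis using that by blast
qed

lemma almost_rainbow_Un3:
  assumes ar: "almost_rainbow (P1 \<union> P2 \<union> P3)" and rb: "rainbow P1" "rainbow P2" "rainbow P3"
    and fin: "finite P1" "finite P2" "finite P3"
    and disj: "P1 \<inter> P2 = {}" "P1 \<inter> P3 = {}" "P2 \<inter> P3 = {}"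
  shows "card (colors P1 \<union> colors P2 \<union> colors P3) + 1
    = card (colors P1) + card (colors P2) + card (colors P3)"
proof -
  have "card (P1 \<union> P2 \<union> P3) = card P1 + card P2 + card P3"
    using fin disj by (simp add: card_Un_disjoint Int_Un_distrib2)
  moreover have "colors (P1 \<union> P2 \<union> P3) = colors P1 \<union> colors P2 \<union> colors P3"
    by (simp add: colors_def image_Un)
  ultimately show ?thesis using ar rb by (simp add: almost_rainbow_def rainbow_def)
qed

lemma bad_piece_theta_paths:
  assumes F: "cgraph F" and H: "H \<subseteq> F" "bad_piece H"
  obtains ws1 ws2 ws3 s t where
    "rainbow_path F H ws1 s t" "rainbow_path F H ws2 s t" "rainbow_path F H ws3 s t" "s \<noteq> t"
    "set ws1 \<inter> set ws2 \<subseteq> {s, t}" "set ws1 \<inter> set ws3 \<subseteq> {s, t}" "set ws2 \<inter> set ws3 \<subseteq> {s, t}"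
    "card (colors_along F ws1 \<union> colors_along F ws2 \<union> colors_along F ws3) + 1
      = card (colors_along F ws1) + card (colors_along F ws2) + card (colors_along F ws3)"
    "verts H = set ws1 \<union> set ws2 \<union> set ws3"
proof -
  obtain P1 P2 P3 s t where th: "theta_parts P1 P2 P3 s t" and H_eq: "H = P1 \<union> P2 \<union> P3"
      and rb: "rainbow P1" "rainbow P2" "rainbow P3"
    using H(2) by (auto simp: bad_piece_def)
  have PF: "P1 \<subseteq> F" "P2 \<subseteq> F" "P3 \<subseteq> F" using H(1) H_eq by auto
  have st: "s \<noteq> t" and pb: "path_between P1 s t" "path_between P2 s t" "path_between P3 s t"
    using th by (simp_all add: theta_parts_def)
  obtain ws1 where w1: "rainbow_path F P1 ws1 s t" "edges_along F ws1 = P1" "set ws1 = verts P1"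
    by (rule path_between_rainbow_path[OF F PF(1) rb(1) pb(1)])
  obtain ws2 where w2: "rainbow_path F P2 ws2 s t" "edges_along F ws2 = P2" "set ws2 = verts P2"
    by (rule path_between_rainbow_path[OF F PF(2) rb(2) pb(2)])
  obtain ws3 where w3: "rainbow_path F P3 ws3 s t" "edges_along F ws3 = P3" "set ws3 = verts P3"
    by (rule path_between_rainbow_path[OF F PF(3) rb(3) pb(3)])
  have "rainbow_path F H ws1 s t" "rainbow_path F H ws2 s t" "rainbow_path F H ws3 s t"
    using w1(1) w2(1) w3(1) by (auto simp: H_eq uedges_Un elim!: rainbow_path_mono)
  moreover have "set ws1 \<inter> set ws2 \<subseteq> {s, t}" "set ws1 \<inter> set ws3 \<subseteq> {s, t}"
      "set ws2 \<inter> set ws3 \<subseteq> {s, t}"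
    using th w1(3) w2(3) w3(3) by (simp_all add: theta_parts_def)
  moreover have "P1 \<inter> P2 = {}" "P1 \<inter> P3 = {}" "P2 \<inter> P3 = {}"
    using th by (auto simp: theta_parts_def uedges_def)
  then have "card (colors P1 \<union> colors P2 \<union> colors P3) + 1
      = card (colors P1) + card (colors P2) + card (colors P3)"
    using H(2) rb pb by (intro almost_rainbow_Un3) (auto simp: H_eq bad_piece_def path_between_def cgraph_def)
  moreover have "colors_along F ws1 = colors P1" "colors_along F ws2 = colors P2"
      "colors_along F ws3 = colors P3"
    using w1(2) w2(2) w3(2) by (simp_all add: colors_along_def colors_def)
  moreover have "verts H = set ws1 \<union> set ws2 \<union> set ws3"
    using w1(3) w2(3) w3(3) by (simp add: H_eq verts_Un)
  ultimately show thesis using that st by simp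
qed

lemma bad_piece_parity:
  assumes nre: "no_rainbow_even_cycle F" and F: "cgraph F" and H: "H \<subseteq> F" "bad_piece H"
    and xy: "x \<in> verts H" "y \<in> verts H" "x \<noteq> y"
  shows "\<exists>P. rainbow_path F H P x y \<and> (even (length P) \<longleftrightarrow> b)"
proof -
  obtain ws1 ws2 ws3 s t where ws: "rainbow_path F H ws1 s t" "rainbow_path F H ws2 s t"
      "rainbow_path F H ws3 s t" and st: "s \<noteq> t"
    and i: "set ws1 \<inter> set ws2 \<subseteq> {s, t}" "set ws1 \<inter> set ws3 \<subseteq> {s, t}" "set ws2 \<inter> set ws3 \<subseteq> {s, t}"
    and card: "card (colors_along F ws1 \<union> colors_along F ws2 \<union> colors_along F ws3) + 1
      = card (colors_along F ws1) + card (colors_along F ws2) + card (colors_along F ws3)"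
    and vH: "verts H = set ws1 \<union> set ws2 \<union> set ws3"
    by (rule bad_piece_theta_paths[OF F H])
  have i': "set ws3 \<inter> set ws2 \<subseteq> {s, t}" "set ws2 \<inter> set ws1 \<subseteq> {s, t}" "set ws3 \<inter> set ws1 \<subseteq> {s, t}"
    using i by auto
  have xs: "x \<in> set ws1 \<union> set ws2 \<union> set ws3" "y \<in> set ws1 \<union> set ws2 \<union> set ws3"
      "x \<in> set ws1 \<union> set ws3 \<union> set ws2" "y \<in> set ws1 \<union> set ws3 \<union> set ws2"
      "x \<in> set ws2 \<union> set ws3 \<union> set ws1" "y \<in> set ws2 \<union> set ws3 \<union> set ws1"
    using xy vH by auto
  from finite_colors_along[OF F] finite_colors_along[OF F] finite_colors_along[OF F] card show ?thesis
  proof (cases rule: card_Un3_one_overlap)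
    case 1
    then show ?thesis using theta_parity[OF nre F H(1) ws st i _ _ _ xs(1,2) xy(3)] by simp
  next
    case 2
    then show ?thesis using theta_parity[OF nre F H(1) ws(1,3,2) st i(2,1) i'(1) _ _ _ xs(3,4) xy(3)]
      by simp
  next
    case 3
    then show ?thesis using theta_parity[OF nre F H(1) ws(2,3,1) st i(3) i'(2,3) _ _ _ xs(5,6) xy(3)]
      by simp
  qed
qed

section \<open>Gluing at single vertices\<close>

text \<open>\<open>N\<close> marks the vertices from which rainbow paths of both parities are available; in the
  blocks of the greedy ordering these are the vertices outside tree parts.\<close>

definition rainbow_linked :: "('v, 'c) cgraph \<Rightarrow> ('v \<Rightarrow> bool) \<Rightarrow> ('v, 'c) cgraph \<Rightarrow> bool" where
  "rainbow_linked F N W \<longleftrightarrow> (\<forall>x \<in> verts W. \<forall>y \<in> verts W. x \<noteq> y \<longrightarrow>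
     (\<exists>P. rainbow_path F W P x y) \<and> (N x \<longrightarrow> (\<forall>b. \<exists>P. rainbow_path F W P x y \<and> (even (length P) \<longleftrightarrow> b))))"

lemma rainbow_linked_mono:
  "rainbow_linked F N W \<Longrightarrow> (\<And>x. x \<in> verts W \<Longrightarrow> N' x \<Longrightarrow> N x) \<Longrightarrow> rainbow_linked F N' W"
  unfolding rainbow_linked_def by blast

lemma rainbow_linked_empty: "rainbow_linked F N {}"
  by (simp add: rainbow_linked_def verts_def)

lemma part_rainbow_linked:
  assumes nre: "no_rainbow_even_cycle F" and F: "cgraph F" and H: "H \<subseteq> F"
    and kind: "long_rainbow_odd_cycle H \<or> bad_piece H \<or> (rainbow H \<and> is_tree H)"
  shows "rainbow_linked F (\<lambda>x. \<not> (rainbow H \<and> is_tree H)) H"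
  unfolding rainbow_linked_def
proof (intro ballI impI)
  fix x y assume xy: "x \<in> verts H" "y \<in> verts H" "x \<noteq> y"
  show "(\<exists>P. rainbow_path F H P x y) \<and> (\<not> (rainbow H \<and> is_tree H) \<longrightarrow>
      (\<forall>b. \<exists>P. rainbow_path F H P x y \<and> (even (length P) \<longleftrightarrow> b)))"
  proof (cases "rainbow H \<and> is_tree H")
    case True
    then show ?thesis using tree_rainbow_path[OF F H _ _ xy(1,2)] by blast
  next
    case False
    then have "\<forall>b. \<exists>P. rainbow_path F H P x y \<and> (even (length P) \<longleftrightarrow> b)"
      using kind long_rainbow_odd_cycle_parity[OF F H _ xy] bad_piece_parity[OF nre F H _ xy] by blast
    then show ?thesis by blast
  qed
qed

lemma rainbow_linked_glue_across:
  assumes F: "cgraph F" "W1 \<subseteq> F" "W2 \<subseteq> F"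
    and I: "rainbow_linked F N1 W1" "rainbow_linked F N2 W2"
    and a: "verts W1 \<inter> verts W2 = {a}" and cd: "colors W1 \<inter> colors W2 = {}"
    and x: "x \<in> verts W1" "x \<notin> verts W2" and y: "y \<in> verts W2" "y \<notin> verts W1"
  shows "(\<exists>P. rainbow_path F (W1 \<union> W2) P x y) \<and>
    (N1 x \<longrightarrow> (\<forall>b. \<exists>P. rainbow_path F (W1 \<union> W2) P x y \<and> (even (length P) \<longleftrightarrow> b)))"
proof -
  have aW: "a \<in> verts W1" "a \<in> verts W2" "x \<noteq> a" "a \<noteq> y" using a x y by auto
  obtain Q where Q: "rainbow_path F W2 Q a y" using I(2) aW y(1) unfolding rainbow_linked_def by blast
  have glue: "rainbow_path F (W1 \<union> W2) (P @ tl Q) x y \<and> length (P @ tl Q) + 1 = length P + length Q"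
    if P: "rainbow_path F W1 P x a" for P
  proof -
    have PQ: "set P \<inter> set Q \<subseteq> {a}"
      using rainbow_path_verts[OF P aW(3)] rainbow_path_verts[OF Q aW(4)] a by blast
    have cPQ: "colors_along F P \<inter> colors_along F Q = {}"
      using colors_along_subset[OF F(1,2) P] colors_along_subset[OF F(1,3) Q] cd by blast
    have P': "rainbow_path F (W1 \<union> W2) P x a" and Q': "rainbow_path F (W1 \<union> W2) Q a y"
      using rainbow_path_mono[OF P] rainbow_path_mono[OF Q] by (simp_all add: uedges_Un)
    have "rainbow_path F (W1 \<union> W2) (P @ tl Q) x y" by (rule rainbow_path_append[OF P' Q' PQ cPQ])
    then show ?thesis using rainbow_pathD(2)[OF Q] length_append_tl by blast
  qed
  obtain P where "rainbow_path F W1 P x a" using I(1) aW x(1) unfolding rainbow_linked_def by blast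
  then have "\<exists>P. rainbow_path F (W1 \<union> W2) P x y" using glue by blast
  moreover have "\<exists>P. rainbow_path F (W1 \<union> W2) P x y \<and> (even (length P) \<longleftrightarrow> b)" if "N1 x" for b
  proof -
    obtain P where P: "rainbow_path F W1 P x a" "even (length P) \<longleftrightarrow> (b \<longleftrightarrow> odd (length Q))"
      using I(1) aW x(1) \<open>N1 x\<close> unfolding rainbow_linked_def by blast
    have "length (P @ tl Q) + 1 = length P + length Q" using glue[OF P(1)] by blast
    then have "even (length (P @ tl Q)) \<longleftrightarrow> (even (length P) \<longleftrightarrow> odd (length Q))" by presburger
    then have "even (length (P @ tl Q)) \<longleftrightarrow> b" using P(2) by blast
    then show ?thesis using glue[OF P(1)] by blast
  qed
  ultimately show ?thesis by blast
qed

lemma rainbow_linked_glue: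
  assumes F: "cgraph F" "W1 \<subseteq> F" "W2 \<subseteq> F"
    and I: "rainbow_linked F N1 W1" "rainbow_linked F N2 W2"
    and a: "verts W1 \<inter> verts W2 = {a}" and cd: "colors W1 \<inter> colors W2 = {}"
  shows "rainbow_linked F (\<lambda>x. N1 x \<and> N2 x) (W1 \<union> W2)"
  unfolding rainbow_linked_def
proof (intro ballI impI)
  fix x y assume xy: "x \<in> verts (W1 \<union> W2)" "y \<in> verts (W1 \<union> W2)" "x \<noteq> y"
  have u: "uedges W1 \<subseteq> uedges (W1 \<union> W2)" "uedges W2 \<subseteq> uedges (W1 \<union> W2)" by (auto simp: uedges_Un)
  consider "x \<in> verts W1" "y \<in> verts W1" | "x \<in> verts W2" "y \<in> verts W2"
    | "x \<in> verts W1 - verts W2" "y \<in> verts W2 - verts W1"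
    | "x \<in> verts W2 - verts W1" "y \<in> verts W1 - verts W2"
    using xy by (auto simp: verts_Un)
  then show "(\<exists>P. rainbow_path F (W1 \<union> W2) P x y) \<and> (N1 x \<and> N2 x \<longrightarrow>
      (\<forall>b. \<exists>P. rainbow_path F (W1 \<union> W2) P x y \<and> (even (length P) \<longleftrightarrow> b)))"
  proof cases
    case 1
    then show ?thesis using I(1) xy(3) rainbow_path_mono[OF _ u(1)] unfolding rainbow_linked_def by meson
  next
    case 2
    then show ?thesis using I(2) xy(3) rainbow_path_mono[OF _ u(2)] unfolding rainbow_linked_def by meson
  next
    case 3
    then show ?thesis using rainbow_linked_glue_across[OF F I a cd] by blast
  next
    case 4
    have "verts W2 \<inter> verts W1 = {a}" "colors W2 \<inter> colors W1 = {}" using a cd by auto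
    then show ?thesis using rainbow_linked_glue_across[OF F(1,3,2) I(2,1)] 4 by (simp add: Un_commute)
  qed
qed

lemma rainbow_linked_single_contact:
  assumes nre: "no_rainbow_even_cycle F" and F: "cgraph F" "U \<subseteq> F" "Q \<subseteq> F"
    and I: "rainbow_linked F NU U" "rainbow_linked F NQ Q" and cd: "colors U \<inter> colors Q = {}"
    and N: "\<forall>x \<in> verts Q \<inter> verts U. NQ x"
    and xy: "x \<in> verts Q \<inter> verts U" "y \<in> verts Q \<inter> verts U"
  shows "x = y"
proof (rule ccontr)
  assume "x \<noteq> y"
  let ?X = "verts Q \<inter> verts U"
  obtain P where "rainbow_path F U P x y" using I(1) xy \<open>x \<noteq> y\<close> unfolding rainbow_linked_def by blast
  then obtain x' y' P' where m: "x' \<in> ?X" "y' \<in> ?X" "x' \<noteq> y'" "rainbow_path F U P' x' y'"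
      "set P' \<inter> ?X \<subseteq> {x', y'}"
    using rainbow_path_shortcut[OF xy \<open>x \<noteq> y\<close>] by blast
  obtain A where A: "rainbow_path F Q A x' y'" "even (length A) \<longleftrightarrow> even (length P')"
    using I(2) N m(1-3) unfolding rainbow_linked_def by blast
  have "set A \<inter> set P' \<subseteq> {x', y'}"
    using rainbow_path_verts[OF A(1) m(3)] rainbow_path_verts[OF m(4,3)] m(5) by blast
  moreover have "colors_along F A \<inter> colors_along F P' = {}"
    using colors_along_subset[OF F(1,3) A(1)] colors_along_subset[OF F(1,2) m(4)] cd by blast
  moreover have "Q \<union> U \<subseteq> F" using F by blast
  moreover have "rainbow_path F (Q \<union> U) A x' y'" "rainbow_path F (Q \<union> U) P' x' y'"
    using rainbow_path_mono[OF A(1)] rainbow_path_mono[OF m(4)] by (auto simp: uedges_Un)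
  ultimately have "odd (length A + length P')"
    using parallel_rainbow_paths_odd[OF nre F(1)] m(3) by blast
  then show False using A(2) by presburger
qed

section \<open>The greedy ordering\<close>

definition union_parts :: "('v, 'c) cgraph list \<Rightarrow> nat set \<Rightarrow> ('v, 'c) cgraph" where
  "union_parts Gs S = (\<Union>i \<in> S. Gs ! i)"

definition tree_part :: "('v, 'c) cgraph list \<Rightarrow> nat \<Rightarrow> bool" where
  "tree_part Gs i \<longleftrightarrow> rainbow (Gs ! i) \<and> is_tree (Gs ! i)"

definition off_trees :: "('v, 'c) cgraph list \<Rightarrow> nat set \<Rightarrow> 'v \<Rightarrow> bool" where
  "off_trees Gs S x \<longleftrightarrow> (\<forall>i \<in> S. tree_part Gs i \<longrightarrow> x \<notin> verts (Gs ! i))"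

definition good_order :: "('v, 'c) cgraph list \<Rightarrow> nat list \<Rightarrow> bool" where
  "good_order Gs js \<longleftrightarrow> (\<forall>i. 1 \<le> i \<and> i < length js \<longrightarrow>
     card (verts (\<Union>j<i. Gs ! (js ! j)) \<inter> verts (Gs ! (js ! i))) \<le> 1)"

text \<open>\<open>js\<close> lists the parts placed so far and \<open>B\<close> is the block currently being grown; parts not
  yet placed do not touch the earlier, finished blocks.\<close>

definition greedy_state :: "('v, 'c) cgraph \<Rightarrow> ('v, 'c) cgraph list \<Rightarrow> nat list \<Rightarrow> nat set \<Rightarrow> bool" where
  "greedy_state F Gs js B \<longleftrightarrow> distinct js \<and> set js \<subseteq> {..<length Gs} \<and> B \<subseteq> set js \<and> good_order Gs js
     \<and> (\<forall>j < length Gs. j \<notin> set js \<longrightarrow> verts (Gs ! j) \<inter> verts (union_parts Gs (set js - B)) = {})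
     \<and> rainbow_linked F (off_trees Gs B) (union_parts Gs B)"

lemma frankensteinD:
  assumes "frankenstein F Gs"
  shows "cgraph F" "no_rainbow_even_cycle F"
    and "i < length Gs \<Longrightarrow> Gs ! i \<subseteq> F"
    and "i < length Gs \<Longrightarrow> cgraph (Gs ! i)"
    and "i < length Gs \<Longrightarrow> long_rainbow_odd_cycle (Gs ! i) \<or> bad_piece (Gs ! i) \<or> tree_part Gs i"
    and "i < length Gs \<Longrightarrow> j < length Gs \<Longrightarrow> i \<noteq> j \<Longrightarrow> colors (Gs ! i) \<inter> colors (Gs ! j) = {}"
    and "i < length Gs \<Longrightarrow> j < length Gs \<Longrightarrow> i \<noteq> j \<Longrightarrow> tree_part Gs i \<Longrightarrow> tree_part Gs j \<Longrightarrow>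
      verts (Gs ! i) \<inter> verts (Gs ! j) = {}"
proof -
  have fr: "cgraph F" "is_partition F Gs"
      "\<forall>H \<in> set Gs. long_rainbow_odd_cycle H \<or> bad_piece H \<or> (rainbow H \<and> is_tree H)"
      "\<forall>i < length Gs. \<forall>j < length Gs. i \<noteq> j \<longrightarrow> tree_part Gs i \<and> tree_part Gs j \<longrightarrow>
        verts (Gs ! i) \<inter> verts (Gs ! j) = {}"
      "no_rainbow_even_cycle F"
    using assms unfolding frankenstein_def no_rainbow_even_cycle_def tree_part_def by blast+
  show "cgraph F" "no_rainbow_even_cycle F" using fr(1,5) .
  show "i < length Gs \<Longrightarrow> Gs ! i \<subseteq> F" "i < length Gs \<Longrightarrow> cgraph (Gs ! i)"
    using fr(2) unfolding is_partition_def by (meson Union_upper nth_mem)+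
  show "i < length Gs \<Longrightarrow> long_rainbow_odd_cycle (Gs ! i) \<or> bad_piece (Gs ! i) \<or> tree_part Gs i"
    using fr(3) by (simp add: tree_part_def)
  show "i < length Gs \<Longrightarrow> j < length Gs \<Longrightarrow> i \<noteq> j \<Longrightarrow> colors (Gs ! i) \<inter> colors (Gs ! j) = {}"
    using fr(2) unfolding is_partition_def by blast
  show "i < length Gs \<Longrightarrow> j < length Gs \<Longrightarrow> i \<noteq> j \<Longrightarrow> tree_part Gs i \<Longrightarrow> tree_part Gs j \<Longrightarrow>
      verts (Gs ! i) \<inter> verts (Gs ! j) = {}"
    using fr(4) by blast
qed

lemma union_parts_subset:
  assumes "frankenstein F Gs" "S \<subseteq> {..<length Gs}"
  shows "union_parts Gs S \<subseteq> F"
  unfolding union_parts_def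
proof (rule UN_least)
  fix i assume "i \<in> S"
  then show "Gs ! i \<subseteq> F" using assms(2) frankensteinD(3)[OF assms(1)] by auto
qed

lemma union_parts_Un: "union_parts Gs (A \<union> B) = union_parts Gs A \<union> union_parts Gs B"
  by (simp add: union_parts_def)

lemma verts_union_parts_split:
  assumes "B \<subseteq> S"
  shows "verts (union_parts Gs S) = verts (union_parts Gs B) \<union> verts (union_parts Gs (S - B))"
proof -
  have "S = B \<union> (S - B)" using assms by blast
  then show ?thesis by (metis union_parts_Un verts_Un)
qed

lemma colors_union_parts_disjoint:
  assumes "frankenstein F Gs" "S \<subseteq> {..<length Gs}" "j < length Gs" "j \<notin> S"
  shows "colors (union_parts Gs S) \<inter> colors (Gs ! j) = {}"
proof -
  have "colors (Gs ! i) \<inter> colors (Gs ! j) = {}" if "i \<in> S" for i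
    using that assms(2-4) frankensteinD(6)[OF assms(1)] by auto
  moreover have "colors (union_parts Gs S) = (\<Union>i \<in> S. colors (Gs ! i))"
    by (auto simp: union_parts_def colors_def)
  ultimately show ?thesis by blast
qed

lemma part_rainbow_linked_off_trees:
  assumes "frankenstein F Gs" "i < length Gs"
  shows "rainbow_linked F (off_trees Gs {i}) (Gs ! i)"
  using part_rainbow_linked[OF frankensteinD(2,1)[OF assms(1)] frankensteinD(3)[OF assms]
      frankensteinD(5)[OF assms, unfolded tree_part_def]]
  by (rule rainbow_linked_mono) (auto simp: off_trees_def tree_part_def)

lemma frankenstein_single_contact:
  assumes fr: "frankenstein F Gs" and B: "B \<subseteq> {..<length Gs}" and j: "j < length Gs" "j \<notin> B"
    and I: "rainbow_linked F (off_trees Gs B) (union_parts Gs B)"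
  shows "card (verts (Gs ! j) \<inter> verts (union_parts Gs B)) \<le> 1"
proof -
  note F = frankensteinD(1,2)[OF fr]
  have U: "union_parts Gs B \<subseteq> F" using union_parts_subset[OF fr B] .
  have Q: "Gs ! j \<subseteq> F" "rainbow_linked F (off_trees Gs {j}) (Gs ! j)"
    using frankensteinD(3)[OF fr j(1)] part_rainbow_linked_off_trees[OF fr j(1)] by auto
  have cd: "colors (union_parts Gs B) \<inter> colors (Gs ! j) = {}"
    using colors_union_parts_disjoint[OF fr B j] .
  have "x = y" if xy: "x \<in> verts (Gs ! j) \<inter> verts (union_parts Gs B)"
      "y \<in> verts (Gs ! j) \<inter> verts (union_parts Gs B)" for x y
  proof (cases "tree_part Gs j")
    case False
    then have "\<forall>z \<in> verts (Gs ! j) \<inter> verts (union_parts Gs B). off_trees Gs {j} z"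
      by (simp add: off_trees_def)
    then show ?thesis using rainbow_linked_single_contact[OF F(2,1) U Q(1) I Q(2) cd _ xy] by blast
  next
    case True
    have "i \<in> B \<Longrightarrow> tree_part Gs i \<Longrightarrow> verts (Gs ! i) \<inter> verts (Gs ! j) = {}" for i
      using frankensteinD(7)[OF fr _ j(1) _ _ True] B j(2) by blast
    then have "\<forall>z \<in> verts (union_parts Gs B) \<inter> verts (Gs ! j). off_trees Gs B z"
      by (auto simp: off_trees_def)
    moreover have "colors (Gs ! j) \<inter> colors (union_parts Gs B) = {}" using cd by blast
    ultimately show ?thesis using rainbow_linked_single_contact[OF F(2,1) Q(1) U Q(2) I] xy by blast
  qed
  moreover have "finite (verts (Gs ! j) \<inter> verts (union_parts Gs B))"
    using finite_verts[OF frankensteinD(4)[OF fr j(1)]] by blast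
  ultimately show ?thesis using card_le_Suc0_iff_eq by (metis One_nat_def)
qed

lemma good_order_snoc:
  assumes "good_order Gs js" and "card (verts (union_parts Gs (set js)) \<inter> verts (Gs ! j)) \<le> 1"
  shows "good_order Gs (js @ [j])"
  unfolding good_order_def
proof (intro allI impI)
  fix i assume i: "1 \<le> i \<and> i < length (js @ [j])"
  have prefix: "(\<Union>l<i. Gs ! ((js @ [j]) ! l)) = (\<Union>l<i. Gs ! (js ! l))"
    using i by (intro SUP_cong) (auto simp: nth_append)
  show "card (verts (\<Union>l<i. Gs ! ((js @ [j]) ! l)) \<inter> verts (Gs ! ((js @ [j]) ! i))) \<le> 1"
  proof (cases "i < length js")
    case True
    then show ?thesis using assms(1) i prefix by (simp add: good_order_def nth_append)
  next
    case False
    then have "i = length js" using i by simp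
    moreover have "set js = (\<lambda>l. js ! l) ` {..<length js}" by (auto simp: set_conv_nth)
    then have "(\<Union>l<length js. Gs ! (js ! l)) = union_parts Gs (set js)"
      by (simp add: union_parts_def image_image)
    ultimately show ?thesis using assms(2) prefix by simp
  qed
qed

lemma greedy_state_Nil: "greedy_state F Gs [] {}"
  by (simp add: greedy_state_def good_order_def union_parts_def rainbow_linked_empty verts_def)

lemma greedy_state_attach:
  assumes fr: "frankenstein F Gs" and st: "greedy_state F Gs js B"
    and j: "j < length Gs" "j \<notin> set js" and touch: "verts (Gs ! j) \<inter> verts (union_parts Gs B) \<noteq> {}"
  shows "greedy_state F Gs (js @ [j]) (insert j B)"
proof -
  have S: "distinct js" "set js \<subseteq> {..<length Gs}" "B \<subseteq> set js" "good_order Gs js"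
      "\<forall>i < length Gs. i \<notin> set js \<longrightarrow> verts (Gs ! i) \<inter> verts (union_parts Gs (set js - B)) = {}"
      "rainbow_linked F (off_trees Gs B) (union_parts Gs B)"
    using st unfolding greedy_state_def by blast+
  have B: "B \<subseteq> {..<length Gs}" "j \<notin> B" using S(2,3) j(2) by auto
  have "card (verts (Gs ! j) \<inter> verts (union_parts Gs B)) \<le> 1"
    by (rule frankenstein_single_contact[OF fr B(1) j(1) B(2) S(6)])
  moreover have "finite (verts (Gs ! j) \<inter> verts (union_parts Gs B))"
    using finite_verts[OF frankensteinD(4)[OF fr j(1)]] by blast
  ultimately have "card (verts (Gs ! j) \<inter> verts (union_parts Gs B)) = 1"
    using touch by (metis One_nat_def card_0_eq le_Suc_eq le_zero_eq)
  then obtain a where "verts (Gs ! j) \<inter> verts (union_parts Gs B) = {a}"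
    by (rule card_1_singletonE)
  then have a: "verts (union_parts Gs B) \<inter> verts (Gs ! j) = {a}" by blast
  have "verts (union_parts Gs (set js)) \<inter> verts (Gs ! j) = {a}"
    using verts_union_parts_split[OF S(3), of Gs] S(5) j a by auto
  then have "good_order Gs (js @ [j])" using good_order_snoc[OF S(4)] by simp
  moreover have "rainbow_linked F (off_trees Gs (insert j B)) (union_parts Gs (insert j B))"
  proof -
    have "rainbow_linked F (\<lambda>x. off_trees Gs B x \<and> off_trees Gs {j} x) (union_parts Gs B \<union> Gs ! j)"
      using rainbow_linked_glue[OF frankensteinD(1)[OF fr] union_parts_subset[OF fr B(1)]
          frankensteinD(3)[OF fr j(1)] S(6) part_rainbow_linked_off_trees[OF fr j(1)] a
          colors_union_parts_disjoint[OF fr B(1) j(1) B(2)]] .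
    moreover have "union_parts Gs (insert j B) = union_parts Gs B \<union> Gs ! j"
      by (auto simp: union_parts_def)
    ultimately show ?thesis by (auto simp: off_trees_def intro: rainbow_linked_mono)
  qed
  moreover have "set (js @ [j]) - insert j B = set js - B" using j(2) by auto
  ultimately show ?thesis using S j unfolding greedy_state_def by (simp add: subset_insertI2)
qed

lemma greedy_state_restart:
  assumes st: "greedy_state F Gs js B" and fr: "frankenstein F Gs" and j: "j < length Gs" "j \<notin> set js"
    and apart: "\<forall>i < length Gs. i \<notin> set js \<longrightarrow> verts (Gs ! i) \<inter> verts (union_parts Gs B) = {}"
  shows "greedy_state F Gs (js @ [j]) {j}"
proof -
  have S: "distinct js" "set js \<subseteq> {..<length Gs}" "B \<subseteq> set js" "good_order Gs js"
      "\<forall>i < length Gs. i \<notin> set js \<longrightarrow> verts (Gs ! i) \<inter> verts (union_parts Gs (set js - B)) = {}"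
    using st unfolding greedy_state_def by blast+
  have closed: "\<forall>i < length Gs. i \<notin> set js \<longrightarrow> verts (Gs ! i) \<inter> verts (union_parts Gs (set js)) = {}"
    using verts_union_parts_split[OF S(3), of Gs] S(5) apart by auto
  then have "good_order Gs (js @ [j])" using good_order_snoc[OF S(4)] j by (simp add: Int_commute)
  moreover have "rainbow_linked F (off_trees Gs {j}) (union_parts Gs {j})"
    using part_rainbow_linked_off_trees[OF fr j(1)] by (simp add: union_parts_def)
  moreover have "set (js @ [j]) - {j} = set js" using j(2) by auto
  ultimately show ?thesis using S(1,2) closed j unfolding greedy_state_def by auto
qed

lemma greedy_state_exists:
  assumes fr: "frankenstein F Gs"
  shows "k \<le> length Gs \<Longrightarrow> \<exists>js B. length js = k \<and> greedy_state F Gs js B"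
proof (induction k)
  case 0
  show ?case using greedy_state_Nil by blast
next
  case (Suc k)
  then obtain js B where js: "length js = k" "greedy_state F Gs js B" by auto
  have "\<not> {..<length Gs} \<subseteq> set js"
    using card_mono[of "set js" "{..<length Gs}"] distinct_card[of js] js Suc.prems
    by (auto simp: greedy_state_def)
  then obtain j0 where j0: "j0 < length Gs" "j0 \<notin> set js" by auto
  show ?case
  proof (cases "\<exists>j < length Gs. j \<notin> set js \<and> verts (Gs ! j) \<inter> verts (union_parts Gs B) \<noteq> {}")
    case True
    then obtain j where "j < length Gs" "j \<notin> set js" "verts (Gs ! j) \<inter> verts (union_parts Gs B) \<noteq> {}"
      by blast
    then show ?thesis using greedy_state_attach[OF fr js(2)] js(1) by (metis length_append_singleton)
  next
    case False
    then show ?thesis using greedy_state_restart[OF js(2) fr j0] js(1) by (metis length_append_singleton)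
  qed
qed

lemma bij_betw_nth_permutation:
  assumes "distinct js" "length js = n" "set js \<subseteq> {..<n}"
  shows "bij_betw ((!) js) {0..<n} {0..<n}"
proof -
  have "card (set js) = card {..<n}" using assms(1,2) by (simp add: distinct_card)
  then have "set js = {..<n}" using assms(3) by (intro card_subset_eq) simp_all
  then show ?thesis using bij_betw_nth[OF assms(1)] assms(2) by (simp add: atLeast0LessThan)
qed

theorem theorem2p4:
  fixes F :: "('v, 'c) cgraph" and Gs :: "('v, 'c) cgraph list"
  assumes "frankenstein F Gs"
  shows "\<exists>\<sigma>. bij_betw \<sigma> {0..<length Gs} {0..<length Gs} \<and>
    (\<forall>i. 1 \<le> i \<and> i < length Gs \<longrightarrow>
       card (verts (\<Union>j<i. Gs ! \<sigma> j) \<inter> verts (Gs ! \<sigma> i)) \<le> 1)"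
proof -
  obtain js B where js: "length js = length Gs" "greedy_state F Gs js B"
    using greedy_state_exists[OF assms order_refl] by blast
  then have "bij_betw ((!) js) {0..<length Gs} {0..<length Gs}"
    by (intro bij_betw_nth_permutation) (auto simp: greedy_state_def)
  moreover have "good_order Gs js" using js(2) by (simp add: greedy_state_def)
  ultimately show ?thesis using js(1) unfolding good_order_def by (intro exI[of _ "(!) js"]) simp
qed

end
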